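(* Let $q$ be a prime power, $t\geq 2$ and $n\geq 1$ integers, and $\sigma=\begin{pmatrix} a & b\\ c & d\end{pmatrix}\in\mathrm{GL}_2(\mathbb{F}_q)$. Suppose that the polynomial $x^{nt}-A\in\mathbb{F}_q[x]$, with $A\neq -d/c$, is irreducible over $\mathbb{F}_q$, and if $t$ is even assume moreover $q\equiv 1\pmod 4$. Then $g_0=P_{\sigma^{-1}}(x^n-A)$ is an irreducible polynomial of degree $n$ with $g_0(\sigma\cdot\infty)\neq 0$, and $g_1=g_0^{R_{\sigma,t}}$ is irreducible.
   Context: For $\sigma=\begin{pmatrix} a & b\\ c & d\end{pmatrix}\in\mathrm{GL}_2(\mathbb{F}_q)$, $\sigma\cdot\infty=a/c$ if $c\neq 0$ and $\sigma\cdot\infty=\infty$ if $c=0$. For $f\in\mathbb{F}_q[x]$ of degree $m$, $P_\sigma(f)(x)=(cx+d)^m f\!\left(\frac{ax+b}{cx+d}\right)$; $\sigma^{-1}$ is the inverse matrix. $S_t(f)(x)=f(x^t)$, and the $R_{\sigma,t}$-transform is $g^{R_{\sigma,t}}=P_{\sigma^{-1}}\circ S_t\circ P_\sigma(g)$ (each $P$ using the degree of its input). *)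

theory Defs
  imports "HOL-Computational_Algebra.Computational_Algebra"
begin

text \<open>A matrix sigma = ((a,b),(c,d)) in GL_2(F_q) is represented by its four entries (a,b,c,d).\<close>

type_synonym 'a mat2 = "'a \<times> 'a \<times> 'a \<times> 'a"

definition gl2 :: "('a::field) mat2 \<Rightarrow> bool" where
  "gl2 s = (case s of (a,b,c,d) \<Rightarrow> a * d - b * c \<noteq> 0)"

definition inv2 :: "('a::field) mat2 \<Rightarrow> 'a mat2" where
  "inv2 s = (case s of (a,b,c,d) \<Rightarrow>
     (let D = a * d - b * c in (d / D, - b / D, - c / D, a / D)))"

text \<open>sigma acting on infinity: None stands for infinity.\<close>
definition moeb_infty :: "('a::field) mat2 \<Rightarrow> 'a option" where
  "moeb_infty s = (case s of (a,b,c,d) \<Rightarrow> if c \<noteq> 0 then Some (a / c) else None)"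

definition nonzero_at :: "('a::field) poly \<Rightarrow> 'a option \<Rightarrow> bool" where
  "nonzero_at f p = (case p of None \<Rightarrow> True | Some x \<Rightarrow> poly f x \<noteq> 0)"

text \<open>P_sigma(f)(x) = (cx+d)^m f((ax+b)/(cx+d)), m = deg f.\<close>
definition P_sig :: "('a::field) mat2 \<Rightarrow> 'a poly \<Rightarrow> 'a poly" where
  "P_sig s f = (case s of (a,b,c,d) \<Rightarrow>
     (\<Sum>i\<le>degree f. smult (coeff f i) ([:b, a:] ^ i * [:d, c:] ^ (degree f - i))))"

definition S_t :: "nat \<Rightarrow> ('a::comm_semiring_1) poly \<Rightarrow> 'a poly" where
  "S_t t f = pcompose f (monom 1 t)"

definition R_trans :: "('a::field) mat2 \<Rightarrow> nat \<Rightarrow> 'a poly \<Rightarrow> 'a poly" where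
  "R_trans s t g = P_sig (inv2 s) (S_t t (P_sig s g))"

end

theory Submission
  imports Defs
begin

text \<open>For a fixed degree \<open>m\<close>, \<open>f \<mapsto> (cx+d)^m f((ax+b)/(cx+d))\<close> is the action of
  \<open>GL\<^sub>2\<close> on binary forms of degree \<open>m\<close>: it is multiplicative, and the transforms by \<open>\<sigma>\<close>
  and \<open>\<sigma>\<^sup>-\<^sup>1\<close> cancel. Hence \<open>P\<^bsub>\<sigma>\<^sup>-\<^sup>1\<^esub>\<close> maps an irreducible polynomial to an irreducible one
  whenever it preserves the degree. For \<open>x^N - A\<close> the degree is preserved unless
  \<open>A = (-d/c)^N\<close>; for \<open>N \<ge> 2\<close> this would make \<open>-d/c\<close> a root of the irreducible
  \<open>x^N - A\<close>, and for \<open>N = 1\<close> it is excluded by hypothesis. Irreducibility of \<open>x^n - A\<close>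
  follows from that of \<open>x^(nt) - A = (x^n - A) \<circ> x^t\<close>, and since \<open>P\<^sub>\<sigma> g\<^sub>0 = x^n - A\<close>, the
  transform \<open>g\<^sub>1\<close> equals \<open>P\<^bsub>\<sigma>\<^sup>-\<^sup>1\<^esub>(x^(nt) - A)\<close>; so both claims are the case
  \<open>N = n\<close>, resp. \<open>N = nt\<close>, of the same fact.\<close>

definition P_sig_deg :: "('a::field) mat2 \<Rightarrow> nat \<Rightarrow> 'a poly \<Rightarrow> 'a poly" where
  "P_sig_deg s m f = (case s of (a,b,c,d) \<Rightarrow>
     (\<Sum>i\<le>m. smult (coeff f i) ([:b, a:] ^ i * [:d, c:] ^ (m - i))))"

definition mat2_mult :: "('a::field) mat2 \<Rightarrow> 'a mat2 \<Rightarrow> 'a mat2" where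
  "mat2_mult s u = (case s of (a,b,c,d) \<Rightarrow> case u of (a',b',c',d') \<Rightarrow>
     (a*a' + b*c', a*b' + b*d', c*a' + d*c', c*b' + d*d'))"

lemma degree_linear_power_le: "degree ([:b, a:] ^ n) \<le> n"
  using degree_power_le[of "[:b, a:]" n] by (cases "a = 0") auto

lemma P_sig_eq_P_sig_deg: "P_sig s f = P_sig_deg s (degree f) f"
  by (simp add: P_sig_def P_sig_deg_def)

lemma smult_sum_right: "smult k (sum F S) = (\<Sum>i\<in>S. smult k (F i))"
  by (induction S rule: infinite_finite_induct) (auto simp: smult_add_right)

lemma P_sig_deg_add: "P_sig_deg s m (f + g) = P_sig_deg s m f + P_sig_deg s m g"
  by (cases s) (simp add: P_sig_deg_def smult_add_left sum.distrib)

lemma P_sig_deg_diff: "P_sig_deg s m (f - g) = P_sig_deg s m f - P_sig_deg s m g"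
  by (cases s) (simp add: P_sig_deg_def smult_diff_left sum_subtractf)

lemma P_sig_deg_smult: "P_sig_deg s m (smult k f) = smult k (P_sig_deg s m f)"
  by (cases s) (simp add: P_sig_deg_def smult_sum_right)

lemma P_sig_deg_0 [simp]: "P_sig_deg s m 0 = 0"
  by (cases s) (simp add: P_sig_deg_def)

lemma P_sig_deg_sum: "P_sig_deg s m (sum F S) = (\<Sum>x\<in>S. P_sig_deg s m (F x))"
  by (induction S rule: infinite_finite_induct) (simp_all add: P_sig_deg_add)

lemma P_sig_deg_0_degree: "P_sig_deg s 0 f = [:coeff f 0:]"
  by (cases s) (simp add: P_sig_deg_def)

lemma P_sig_deg_pCons:
  "P_sig_deg (a,b,c,d) (Suc m) (pCons k h)
     = smult k ([:d,c:] ^ Suc m) + [:b,a:] * P_sig_deg (a,b,c,d) m h"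
proof -
  have "(\<Sum>i\<le>m. smult (coeff h i) ([:b, a:] ^ Suc i * [:d, c:] ^ (m - i)))
     = [:b,a:] * (\<Sum>i\<le>m. smult (coeff h i) ([:b, a:] ^ i * [:d, c:] ^ (m - i)))"
    unfolding sum_distrib_left
    by (rule sum.cong) (simp_all only: mult_smult_right power_Suc mult.assoc)
  then show ?thesis
    unfolding P_sig_deg_def by (simp only: sum.atMost_Suc_shift) simp
qed

lemma degree_P_sig_deg_le: "degree (P_sig_deg s m f) \<le> m"
proof (cases s)
  case (fields a b c d)
  have "degree ([:b, a:] ^ i * [:d, c:] ^ (m - i)) \<le> m" if "i \<le> m" for i
    using that order.trans[OF degree_mult_le
        add_mono[OF degree_linear_power_le[of b a i] degree_linear_power_le[of d c "m - i"]]]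
    by simp
  then show ?thesis
    unfolding fields P_sig_deg_def
    by (auto intro!: degree_sum_le order.trans[OF degree_smult_le])
qed

lemma P_sig_deg_add_degree:
  assumes "degree g \<le> m"
  shows "P_sig_deg (a,b,c,d) (m + k) g = [:d,c:] ^ k * P_sig_deg (a,b,c,d) m g"
proof -
  have "(\<Sum>i\<le>m+k. smult (coeff g i) ([:b, a:] ^ i * [:d, c:] ^ (m + k - i)))
      = (\<Sum>i\<le>m. smult (coeff g i) ([:b, a:] ^ i * [:d, c:] ^ (m + k - i)))"
    using assms by (intro sum.mono_neutral_right) (auto simp: coeff_eq_0)
  also have "\<dots> = (\<Sum>i\<le>m. [:d,c:] ^ k * smult (coeff g i) ([:b, a:] ^ i * [:d, c:] ^ (m - i)))"
  proof (rule sum.cong)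
    fix i assume "i \<in> {..m}"
    then have "m + k - i = k + (m - i)" by auto
    then show "smult (coeff g i) ([:b, a:] ^ i * [:d, c:] ^ (m + k - i)) =
       [:d,c:] ^ k * smult (coeff g i) ([:b, a:] ^ i * [:d, c:] ^ (m - i))"
      by (simp add: power_add algebra_simps)
  qed simp
  finally show ?thesis by (simp add: P_sig_deg_def sum_distrib_left)
qed

lemma P_sig_deg_mult:
  assumes "degree f \<le> m1" "degree g \<le> m2"
  shows "P_sig_deg (a,b,c,d) (m1 + m2) (f * g) = P_sig_deg (a,b,c,d) m1 f * P_sig_deg (a,b,c,d) m2 g"
  using assms(1)
proof (induction m1 arbitrary: f)
  case 0
  then obtain k where "f = [:k:]" by (metis degree_0_id le_0_eq)
  then show ?case by (simp add: P_sig_deg_smult P_sig_deg_0_degree)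
next
  case (Suc m1)
  obtain k f' where f: "f = pCons k f'" by (cases f)
  have deg_f': "degree f' \<le> m1" using Suc.prems f by (cases "f' = 0") auto
  have "f * g = smult k g + pCons 0 (f' * g)" by (simp add: f)
  then have "P_sig_deg (a,b,c,d) (Suc m1 + m2) (f * g)
     = smult k (P_sig_deg (a,b,c,d) (m2 + Suc m1) g)
       + P_sig_deg (a,b,c,d) (Suc (m1 + m2)) (pCons 0 (f' * g))"
    by (simp add: P_sig_deg_add P_sig_deg_smult add.commute)
  also have "\<dots> = smult k ([:d,c:] ^ Suc m1 * P_sig_deg (a,b,c,d) m2 g)
       + [:b,a:] * (P_sig_deg (a,b,c,d) m1 f' * P_sig_deg (a,b,c,d) m2 g)"
    by (simp only: P_sig_deg_add_degree[OF assms(2)] P_sig_deg_pCons Suc.IH[OF deg_f']) simp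
  also have "\<dots> = P_sig_deg (a,b,c,d) (Suc m1) f * P_sig_deg (a,b,c,d) m2 g"
    by (simp add: f P_sig_deg_pCons algebra_simps)
  finally show ?case .
qed

lemma P_sig_deg_linear_power:
  "P_sig_deg (a,b,c,d) k ([:y, x:] ^ k) = [:y*d + x*b, y*c + x*a:] ^ k"
proof (induction k)
  case 0
  then show ?case by (simp add: P_sig_deg_0_degree)
next
  case (Suc k)
  have "P_sig_deg (a,b,c,d) (1 + k) ([:y, x:] * [:y, x:] ^ k)
      = P_sig_deg (a,b,c,d) 1 [:y, x:] * P_sig_deg (a,b,c,d) k ([:y, x:] ^ k)"
    by (rule P_sig_deg_mult) (simp_all add: degree_linear_power_le)
  then show ?case using Suc.IH by (simp add: P_sig_deg_def algebra_simps)
qed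

lemma P_sig_deg_P_sig_deg:
  "P_sig_deg (a,b,c,d) m (P_sig_deg (a',b',c',d') m f) = P_sig_deg (mat2_mult (a',b',c',d') (a,b,c,d)) m f"
proof -
  have "P_sig_deg (a,b,c,d) m ([:b', a':] ^ i * [:d', c':] ^ (m - i))
      = [:a'*b + b'*d, a'*a + b'*c:] ^ i * [:c'*b + d'*d, c'*a + d'*c:] ^ (m - i)"
    if "i \<le> m" for i
    using P_sig_deg_mult[of "[:b', a':] ^ i" i "[:d', c':] ^ (m - i)" "m - i"] that
    by (simp add: degree_linear_power_le P_sig_deg_linear_power algebra_simps)
  then show ?thesis
    by (simp add: P_sig_deg_def[of "(a',b',c',d')"] P_sig_deg_sum P_sig_deg_smult)
       (simp add: P_sig_deg_def mat2_mult_def)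
qed

lemma P_sig_deg_identity: "degree f \<le> m \<Longrightarrow> P_sig_deg (1,0,0,1) m f = f"
  using poly_as_sum_of_monoms'[of f m] by (simp add: P_sig_deg_def pCons_one monom_altdef)

lemma mat2_mult_inv2: "gl2 s \<Longrightarrow> mat2_mult (inv2 s) s = (1,0,0,1)"
  by (cases s) (simp add: gl2_def inv2_def mat2_mult_def Let_def divide_simps)

lemma P_sig_deg_P_sig_deg_inv2:
  assumes "gl2 s" "degree f \<le> m"
  shows "P_sig_deg s m (P_sig_deg (inv2 s) m f) = f"
  using assms P_sig_deg_identity[of f m] mat2_mult_inv2[of s]
  by (cases s, cases "inv2 s") (simp add: P_sig_deg_P_sig_deg)

lemma P_sig_P_sig_inv2:
  assumes "gl2 s" "degree (P_sig (inv2 s) f) = degree f"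
  shows "P_sig s (P_sig (inv2 s) f) = f"
  using assms P_sig_deg_P_sig_deg_inv2[of s f "degree f"] by (simp add: P_sig_eq_P_sig_deg)

lemma irreducible_field_polyD:
  fixes p :: "'a::field poly"
  assumes "irreducible p" "p = q * r"
  shows "degree q = 0 \<or> degree r = 0"
  using reducible_polyI[OF assms(2)] assms(1) by auto

lemma irreducible_field_poly_iff:
  fixes p :: "'a::field poly"
  shows "irreducible p \<longleftrightarrow> degree p > 0 \<and> (\<forall>q r. p = q * r \<longrightarrow> degree q = 0 \<or> degree r = 0)"
proof
  assume irr: "irreducible p"
  then have "p \<noteq> 0" "\<not> is_unit p" by (auto simp: irreducible_def)
  then have "degree p > 0" using is_unit_iff_degree by blast
  moreover have "degree q = 0 \<or> degree r = 0" if "p = q * r" for q r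
    using irreducible_field_polyD[OF irr that] .
  ultimately show "degree p > 0 \<and> (\<forall>q r. p = q * r \<longrightarrow> degree q = 0 \<or> degree r = 0)"
    by blast
next
  assume p: "degree p > 0 \<and> (\<forall>q r. p = q * r \<longrightarrow> degree q = 0 \<or> degree r = 0)"
  show "irreducible p"
  proof (rule irreducibleI)
    show "p \<noteq> 0" using p by auto
    then show "\<not> is_unit p" using p is_unit_iff_degree[of p] by auto
    fix q r assume "p = q * r"
    with p \<open>p \<noteq> 0\<close> show "is_unit q \<or> is_unit r" by (auto simp: is_unit_iff_degree)
  qed
qed

lemma irreducible_P_sig_deg_inv2:
  fixes f :: "'a::field poly"
  assumes s: "gl2 s" and irr: "irreducible f" and deg_f: "degree f = m"
    and deg_g: "degree (P_sig_deg (inv2 s) m f) = m"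
  shows "irreducible (P_sig_deg (inv2 s) m f)"
proof -
  obtain a b c d where s_eq: "s = (a,b,c,d)" by (cases s)
  have "m > 0" using irr deg_f unfolding irreducible_field_poly_iff by blast
  moreover have "degree u = 0 \<or> degree v = 0" if uv: "P_sig_deg (inv2 s) m f = u * v" for u v
  proof -
    have "u \<noteq> 0" "v \<noteq> 0" using uv deg_g \<open>m > 0\<close> by auto
    then have m_eq: "m = degree u + degree v" using uv deg_g degree_mult_eq by metis
    have "f = P_sig_deg s (degree u + degree v) (u * v)"
      using P_sig_deg_P_sig_deg_inv2[OF s, of f m] deg_f uv m_eq by simp
    also have "\<dots> = P_sig_deg s (degree u) u * P_sig_deg s (degree v) v"
      unfolding s_eq by (rule P_sig_deg_mult) auto
    finally have f_eq: "f = P_sig_deg s (degree u) u * P_sig_deg s (degree v) v" .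
    then have "P_sig_deg s (degree u) u \<noteq> 0" "P_sig_deg s (degree v) v \<noteq> 0"
      using irr by auto
    then have "degree (P_sig_deg s (degree u) u) + degree (P_sig_deg s (degree v) v) = degree u + degree v"
      using f_eq deg_f m_eq degree_mult_eq by metis
    with degree_P_sig_deg_le[of s "degree u" u] degree_P_sig_deg_le[of s "degree v" v]
    have "degree (P_sig_deg s (degree u) u) = degree u" "degree (P_sig_deg s (degree v) v) = degree v"
      by linarith+
    moreover have "degree (P_sig_deg s (degree u) u) = 0 \<or> degree (P_sig_deg s (degree v) v) = 0"
      using irreducible_field_polyD[OF irr f_eq] .
    ultimately show ?thesis by simp
  qed
  ultimately show ?thesis
    unfolding irreducible_field_poly_iff using deg_g by auto
qed

lemma irreducible_pcomposeD:
  fixes p q :: "'a::field poly"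
  assumes "irreducible (pcompose p q)" and q: "degree q > 0"
  shows "irreducible p"
  unfolding irreducible_field_poly_iff
proof (intro conjI allI impI)
  have "degree (pcompose p q) > 0"
    using assms(1) unfolding irreducible_field_poly_iff by blast
  then show "degree p > 0" by (simp add: degree_pcompose)
  fix u v assume "p = u * v"
  then have "pcompose p q = pcompose u q * pcompose v q" by (simp add: pcompose_mult)
  then have "degree (pcompose u q) = 0 \<or> degree (pcompose v q) = 0"
    by (rule irreducible_field_polyD[OF assms(1)])
  then show "degree u = 0 \<or> degree v = 0" using q by (simp add: degree_pcompose)
qed

lemma degree_monom_minus_const:
  fixes A :: "'a::comm_ring_1"
  assumes "n \<ge> 1"
  shows "degree (monom 1 n - [:A:]) = n"
proof -
  have eq: "monom 1 n - [:A:] = monom 1 n + [:-A:]" by simp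
  have "degree (monom 1 n + [:-A:]) = n"
    using degree_add_eq_left[of "[:-A:]" "monom 1 n"] assms by (simp add: degree_monom_eq)
  then show ?thesis by (simp only: eq)
qed

lemma reducible_monom_minus_power:
  fixes y :: "'a::field"
  assumes "N \<ge> 2"
  shows "\<not> irreducible (monom 1 N - [:y ^ N:])"
  using assms by (intro root_imp_reducible_poly[of _ y]) (simp_all add: poly_monom degree_monom_minus_const)

lemma pcompose_monom_one: "pcompose (monom 1 n) q = q ^ n"
  by (induction n) (simp_all add: monom_Suc pcompose_pCons monom_0 pCons_one flip: pCons_one)

lemma S_t_binomial: "S_t t (monom 1 n - [:A::'a::comm_ring_1:]) = monom 1 (n * t) - [:A:]"
  by (simp add: S_t_def pcompose_diff pcompose_monom_one monom_power mult.commute)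

lemma coeff_linear_power_degree: "coeff ([:b, a:] ^ n) n = (a::'a::comm_semiring_1) ^ n"
proof (induction n)
  case (Suc n)
  have "coeff ([:b, a:] ^ n) (Suc n) = 0"
    using degree_linear_power_le[of b a n] by (simp add: coeff_eq_0)
  then show ?case using Suc by (simp add: coeff_pCons)
qed simp

lemma P_sig_deg_binomial:
  "P_sig_deg (a,b,c,d) N (monom 1 N - [:A:]) = [:b,a:] ^ N - smult A ([:d,c:] ^ N)"
proof -
  have "P_sig_deg (a,b,c,d) N (monom 1 N) = [:b,a:] ^ N"
    using P_sig_deg_linear_power[of a b c d N 0 1] by (simp add: monom_altdef)
  moreover have "P_sig_deg (a,b,c,d) N [:A:] = smult A ([:d,c:] ^ N)"
    using P_sig_deg_add_degree[of "[:A:]" 0 a b c d N] by (simp add: P_sig_deg_0_degree)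
  ultimately show ?thesis by (simp add: P_sig_deg_diff)
qed

lemma degree_P_sig_deg_inv2_binomial:
  assumes s: "gl2 (a,b,c,d)" and dc: "d ^ N \<noteq> A * (- c) ^ N"
  shows "degree (P_sig_deg (inv2 (a,b,c,d)) N (monom 1 N - [:A:])) = N"
proof -
  define D where "D = a * d - b * c"
  have "D \<noteq> 0" using s by (simp add: gl2_def D_def)
  have "coeff (P_sig_deg (inv2 (a,b,c,d)) N (monom 1 N - [:A:])) N = (d/D) ^ N - A * (-c/D) ^ N"
    by (simp add: inv2_def Let_def D_def P_sig_deg_binomial coeff_linear_power_degree)
  also have "\<dots> = (d ^ N - A * (- c) ^ N) / D ^ N"
    by (metis minus_divide_left power_divide diff_divide_distrib times_divide_eq_right)
  also have "\<dots> \<noteq> 0"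
    using dc \<open>D \<noteq> 0\<close> by simp
  finally show ?thesis
    using degree_P_sig_deg_le le_antisym le_degree by metis
qed

lemma P_sig_inv2_binomial:
  fixes A :: "'a::field"
  assumes s: "gl2 (a,b,c,d)" and irr: "irreducible (monom 1 N - [:A:])"
    and A: "c \<noteq> 0 \<longrightarrow> A \<noteq> - d / c"
  shows "degree (P_sig (inv2 (a,b,c,d)) (monom 1 N - [:A:])) = N
    \<and> irreducible (P_sig (inv2 (a,b,c,d)) (monom 1 N - [:A:]))"
proof -
  have "N \<noteq> 0"
  proof
    assume "N = 0"
    then have "degree (monom 1 N - [:A:]) = 0" by (simp add: one_pCons)
    with irr show False by (simp add: irreducible_field_poly_iff)
  qed
  then have deg_f: "degree (monom 1 N - [:A:]) = N"
    by (simp add: degree_monom_minus_const)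
  have "d ^ N \<noteq> A * (- c) ^ N"
  proof (cases "c = 0")
    case True
    then show ?thesis using s \<open>N \<noteq> 0\<close> by (simp add: gl2_def power_0_left)
  next
    case False
    have "A \<noteq> (- d / c) ^ N"
      using A False irr reducible_monom_minus_power[of N "- d / c"] \<open>N \<noteq> 0\<close>
      by (cases "N = 1") auto
    moreover have "(- d / c) ^ N = d ^ N / (- c) ^ N"
      by (metis minus_divide_left minus_divide_right power_divide)
    ultimately show ?thesis using False by auto
  qed
  then have deg_g: "degree (P_sig_deg (inv2 (a,b,c,d)) N (monom 1 N - [:A:])) = N"
    by (rule degree_P_sig_deg_inv2_binomial[OF s])
  show ?thesis
    using irreducible_P_sig_deg_inv2[OF s irr deg_f deg_g] deg_g deg_f
    by (simp add: P_sig_eq_P_sig_deg)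
qed

lemma poly_P_sig_deg:
  "poly (P_sig_deg (a,b,c,d) m f) x = (\<Sum>i\<le>m. coeff f i * (a*x + b) ^ i * (c*x + d) ^ (m - i))"
  by (simp add: P_sig_deg_def poly_sum algebra_simps)

lemma poly_P_sig_deg_inv2_moeb_infty:
  assumes s: "gl2 (a,b,c,d)" and "c \<noteq> 0"
  shows "poly (P_sig_deg (inv2 (a,b,c,d)) m f) (a / c) = coeff f m / c ^ m"
proof -
  define D where "D = a * d - b * c"
  have "D \<noteq> 0" using s by (simp add: gl2_def D_def)
  have inv: "inv2 (a,b,c,d) = (d/D, -b/D, -c/D, a/D)"
    by (simp add: inv2_def Let_def D_def)
  have lin: "d/D * (a/c) + -b/D = 1/c" "-c/D * (a/c) + a/D = 0"
    using \<open>c \<noteq> 0\<close> \<open>D \<noteq> 0\<close> by (simp_all add: D_def divide_simps)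
  have "poly (P_sig_deg (inv2 (a,b,c,d)) m f) (a / c) = (\<Sum>i\<le>m. coeff f i * (1/c) ^ i * 0 ^ (m - i))"
    unfolding inv poly_P_sig_deg lin ..
  also have "\<dots> = (\<Sum>i\<le>m. if i = m then coeff f m * (1/c) ^ m else 0)"
    by (rule sum.cong) (auto simp: power_0_left)
  finally show ?thesis by (simp add: power_one_over)
qed

theorem lemma5p4:
  fixes a b c d A :: "'a::{finite, field}" and n t :: nat
  assumes "t \<ge> 2" and "n \<ge> 1"
    and "gl2 (a, b, c, d)"
    and "irreducible (monom 1 (n * t) - [:A:])"
    and "c \<noteq> 0 \<longrightarrow> A \<noteq> - d / c"
    and "even t \<longrightarrow> card (UNIV :: 'a set) mod 4 = 1"
  shows "irreducible (P_sig (inv2 (a, b, c, d)) (monom 1 n - [:A:]))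
       \<and> degree (P_sig (inv2 (a, b, c, d)) (monom 1 n - [:A:])) = n
       \<and> nonzero_at (P_sig (inv2 (a, b, c, d)) (monom 1 n - [:A:])) (moeb_infty (a, b, c, d))
       \<and> irreducible (R_trans (a, b, c, d) t (P_sig (inv2 (a, b, c, d)) (monom 1 n - [:A:])))"
proof -
  let ?f = "monom 1 n - [:A:]" and ?g\<^sub>0 = "P_sig (inv2 (a, b, c, d)) (monom 1 n - [:A:])"
  have "irreducible ?f"
    using irreducible_pcomposeD[of ?f "monom 1 t"] assms(1,4) S_t_binomial[of t n A]
    by (simp add: S_t_def degree_monom_eq)
  then have g\<^sub>0: "degree ?g\<^sub>0 = n \<and> irreducible ?g\<^sub>0"
    using P_sig_inv2_binomial[OF assms(3)] assms(5) by blast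
  have "coeff ?f n = 1"
    using assms(2) by (simp add: coeff_pCons split: nat.split)
  then have "nonzero_at ?g\<^sub>0 (moeb_infty (a, b, c, d))"
    using poly_P_sig_deg_inv2_moeb_infty[OF assms(3), of n ?f] assms(2)
    by (auto simp: nonzero_at_def moeb_infty_def P_sig_eq_P_sig_deg degree_monom_minus_const)
  moreover have "R_trans (a, b, c, d) t ?g\<^sub>0 = P_sig (inv2 (a, b, c, d)) (monom 1 (n * t) - [:A:])"
    using g\<^sub>0 assms(2)
    by (simp add: R_trans_def P_sig_P_sig_inv2[OF assms(3)] degree_monom_minus_const S_t_binomial)
  ultimately show ?thesis
    using g\<^sub>0 P_sig_inv2_binomial[OF assms(3,4,5)] by simp
qed

end
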